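(* Let $(R,\mathfrak{m})$ be a commutative Noetherian local ring of prime characteristic $p$, and suppose there is a left $R[x,f]$-module $E$ which, as an $R$-module, is isomorphic to $E_R(R/\mathfrak{m})$. Let $\widetilde{E}=\bigoplus_{n\in\mathbb{N}_0}E_n$ with each $E_n=E$, the graded left $R[x,f]$-module in which $x$ maps $e\in E_n$ to $xe\in E_{n+1}$. Let $M$ be a non-zero $R$-module of finite length whose zero submodule is irreducible (i.e. is not the intersection of two non-zero submodules). Then there exists a homogeneous $R[x,f]$-homomorphism $\lambda=\bigoplus_{i\in\mathbb{N}_0}\lambda_i:R[x,f]\otimes_RM=\bigoplus_{i\in\mathbb{N}_0}(Rx^i\otimes_RM)\to\widetilde{E}$ such that $\lambda_0$ is a monomorphism.
   Context: $R[x,f]$ denotes the Frobenius skew polynomial ring over $R$: as a left $R$-module it is free on $(x^i)_{i\in\mathbb{N}_0}$, with multiplication subject to $xr = r^px$; it is graded with $n$th component $Rx^n$, viewed as an $(R,R)$-bimodule (so $rx^i\cdot s=rs^{p^i}x^i$), and $R[x,f]\otimes_RM=\bigoplus_i(Rx^i\otimes_RM)$ is a graded left $R[x,f]$-module. $\lambda_i$ denotes the restriction of $\lambda$ to the degree-$i$ component. *)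

theory Defs
  imports Main HOL.Modules "HOL-Library.Poly_Mapping" "HOL-Computational_Algebra.Primes"
begin

definition is_ideal :: "'a::comm_ring_1 set \<Rightarrow> bool" where
  "is_ideal I \<longleftrightarrow> module.subspace ((*) :: 'a \<Rightarrow> 'a \<Rightarrow> 'a) I"

definition noetherian_ring :: "'a::comm_ring_1 itself \<Rightarrow> bool" where
  "noetherian_ring _ \<longleftrightarrow>
     (\<forall>I::'a set. is_ideal I \<longrightarrow> (\<exists>S. finite S \<and> I = module.span (*) S))"

definition maximal_ideal :: "'a::comm_ring_1 set \<Rightarrow> bool" where
  "maximal_ideal m \<longleftrightarrow> is_ideal m \<and> m \<noteq> UNIV \<and>
     (\<forall>J. is_ideal J \<longrightarrow> m \<subseteq> J \<longrightarrow> J = m \<or> J = UNIV)"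

definition local_ring :: "'a::comm_ring_1 set \<Rightarrow> bool" where
  "local_ring m \<longleftrightarrow> maximal_ideal m \<and> (\<forall>n. maximal_ideal n \<longrightarrow> n = m)"

definition has_prime_char :: "'a::comm_ring_1 itself \<Rightarrow> nat \<Rightarrow> bool" where
  "has_prime_char _ p \<longleftrightarrow> prime p \<and> of_nat p = (0::'a)"

definition annihilator :: "('a::comm_ring_1 \<Rightarrow> 'b::ab_group_add \<Rightarrow> 'b) \<Rightarrow> 'b \<Rightarrow> 'a set" where
  "annihilator s e = {r. s r e = 0}"

text \<open>Injectivity of an R-module, via Baer's criterion: every R-linear map from an
  ideal of R into E extends to an R-linear map R \<rightarrow> E.\<close>
definition injective_module :: "('a::comm_ring_1 \<Rightarrow> 'b::ab_group_add \<Rightarrow> 'b) \<Rightarrow> bool" where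
  "injective_module s \<longleftrightarrow>
     (\<forall>I h. is_ideal I \<longrightarrow>
        (\<forall>a\<in>I. \<forall>b\<in>I. h (a + b) = h a + h b) \<longrightarrow>
        (\<forall>r. \<forall>a\<in>I. h (r * a) = s r (h a)) \<longrightarrow>
        (\<exists>g. (\<forall>a b. g (a + b) = g a + g b) \<and> (\<forall>r a. g (r * a) = s r (g a)) \<and>
             (\<forall>a\<in>I. g a = h a)))"

text \<open>E is (isomorphic to) the injective hull E_R(R/m): E is injective and is an essential
  extension of a submodule R e isomorphic to R/m (i.e. cyclic with annihilator m).\<close>
definition injective_hull_residue_field ::
    "('a::comm_ring_1 \<Rightarrow> 'b::ab_group_add \<Rightarrow> 'b) \<Rightarrow> 'a set \<Rightarrow> bool" where
  "injective_hull_residue_field s m \<longleftrightarrow>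
     module s \<and> injective_module s \<and>
     (\<exists>e. annihilator s e = m \<and>
        (\<forall>N. module.subspace s N \<longrightarrow> N \<noteq> {0} \<longrightarrow>
             (\<exists>y\<in>N. y \<noteq> 0 \<and> y \<in> module.span s {e})))"

text \<open>A left R[x,f]-module: an R-module together with the action of x, which is additive and
  satisfies x (r e) = r^p (x e) (the defining relation x r = r^p x of R[x,f]).\<close>
definition Rxf_module ::
    "nat \<Rightarrow> ('a::comm_ring_1 \<Rightarrow> 'b::ab_group_add \<Rightarrow> 'b) \<Rightarrow> ('b \<Rightarrow> 'b) \<Rightarrow> bool" where
  "Rxf_module p s xa \<longleftrightarrow> module s \<and>
     (\<forall>a b. xa (a + b) = xa a + xa b) \<and> (\<forall>r a. xa (s r a) = s (r ^ p) (xa a))"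

definition finite_length :: "('a::comm_ring_1 \<Rightarrow> 'b::ab_group_add \<Rightarrow> 'b) \<Rightarrow> bool" where
  "finite_length s \<longleftrightarrow>
     (\<exists>n N. N 0 = {0} \<and> N n = UNIV \<and> (\<forall>j\<le>n. module.subspace s (N j)) \<and>
        (\<forall>j<n. N j \<subset> N (Suc j) \<and>
           \<not> (\<exists>L. module.subspace s L \<and> N j \<subset> L \<and> L \<subset> N (Suc j))))"

definition zero_submodule_irreducible :: "('a::comm_ring_1 \<Rightarrow> 'b::ab_group_add \<Rightarrow> 'b) \<Rightarrow> bool" where
  "zero_submodule_irreducible s \<longleftrightarrow>
     \<not> (\<exists>A B. module.subspace s A \<and> module.subspace s B \<and> A \<noteq> {0} \<and> B \<noteq> {0} \<and>
            A \<inter> B = {0})"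

text \<open>Free abelian group on R \<times> M: finitely supported functions (R x M) =>0 int.
  The relations for Rx^i \<otimes>_R M, where the right R-action on Rx^i is a \<cdot> s = a s^(p^i).\<close>

abbreviation gen :: "'a \<Rightarrow> 'm \<Rightarrow> ('a \<times> 'm) \<Rightarrow>\<^sub>0 int" where
  "gen a y \<equiv> Poly_Mapping.single (a, y) 1"

inductive_set tens_rel ::
    "nat \<Rightarrow> ('a::comm_ring_1 \<Rightarrow> 'm::ab_group_add \<Rightarrow> 'm) \<Rightarrow> nat \<Rightarrow> (('a \<times> 'm) \<Rightarrow>\<^sub>0 int) set"
  for p s i where
    rel_add_left: "gen (a + b) y - gen a y - gen b y \<in> tens_rel p s i"
  | rel_add_right: "gen a (y + z) - gen a y - gen a z \<in> tens_rel p s i"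
  | rel_balanced: "gen (a * c ^ (p ^ i)) y - gen a (s c y) \<in> tens_rel p s i"
  | rel_zero: "0 \<in> tens_rel p s i"
  | rel_plus: "g \<in> tens_rel p s i \<Longrightarrow> h \<in> tens_rel p s i \<Longrightarrow> g + h \<in> tens_rel p s i"
  | rel_uminus: "g \<in> tens_rel p s i \<Longrightarrow> - g \<in> tens_rel p s i"

definition tcls :: "nat \<Rightarrow> ('a::comm_ring_1 \<Rightarrow> 'm::ab_group_add \<Rightarrow> 'm) \<Rightarrow> nat \<Rightarrow>
    (('a \<times> 'm) \<Rightarrow>\<^sub>0 int) \<Rightarrow> (('a \<times> 'm) \<Rightarrow>\<^sub>0 int) set" where
  "tcls p s i g = {h. h - g \<in> tens_rel p s i}"

definition free_smul :: "'a::comm_ring_1 \<Rightarrow> (('a \<times> 'm) \<Rightarrow>\<^sub>0 int) \<Rightarrow> (('a \<times> 'm) \<Rightarrow>\<^sub>0 int)" where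
  "free_smul r g = (\<Sum>z\<in>Poly_Mapping.keys g. Poly_Mapping.single (r * fst z, snd z) (Poly_Mapping.lookup g z))"

text \<open>Action of x on representatives: x \<cdot> (a x^i \<otimes> y) = a^p x^(i+1) \<otimes> y.\<close>
definition free_x :: "nat \<Rightarrow> (('a::comm_ring_1 \<times> 'm) \<Rightarrow>\<^sub>0 int) \<Rightarrow> (('a \<times> 'm) \<Rightarrow>\<^sub>0 int)" where
  "free_x p g = (\<Sum>z\<in>Poly_Mapping.keys g. Poly_Mapping.single (fst z ^ p, snd z) (Poly_Mapping.lookup g z))"

text \<open>A homogeneous R[x,f]-homomorphism \<lambda> = \<Oplus> \<lambda>_i from R[x,f] \<otimes>_R M = \<Oplus> (Rx^i \<otimes>_R M)
  to the graded module \<Oplus>_n E_n (E_n = E, x : E_n \<rightarrow> E_(n+1), e \<mapsto> x e).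
  lam i is the degree-i component, defined on the classes tcls p sM i g.\<close>
definition homog_Rxf_hom ::
    "nat \<Rightarrow> ('a::comm_ring_1 \<Rightarrow> 'm::ab_group_add \<Rightarrow> 'm) \<Rightarrow> ('a \<Rightarrow> 'e::ab_group_add \<Rightarrow> 'e) \<Rightarrow>
     ('e \<Rightarrow> 'e) \<Rightarrow> (nat \<Rightarrow> (('a \<times> 'm) \<Rightarrow>\<^sub>0 int) set \<Rightarrow> 'e) \<Rightarrow> bool" where
  "homog_Rxf_hom p sM sE xE lam \<longleftrightarrow>
     (\<forall>i g h. lam i (tcls p sM i (g + h)) = lam i (tcls p sM i g) + lam i (tcls p sM i h)) \<and>
     (\<forall>i r g. lam i (tcls p sM i (free_smul r g)) = sE r (lam i (tcls p sM i g))) \<and>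
     (\<forall>i g. lam (Suc i) (tcls p sM (Suc i) (free_x p g)) = xE (lam i (tcls p sM i g)))"

end

theory Submission
  imports Defs
begin

text \<open>
  A finite-length module M whose zero submodule is irreducible contains a simple submodule R y,
  and every nonzero submodule of M meets R y. Since ann y and ann e are both the maximal ideal,
  R y \<cong> R/m \<cong> R e \<subseteq> E; this embedding extends, one composition factor at a time via Baer's
  criterion, to an R-linear \<iota> : M \<rightarrow> E, and \<iota> is injective because its kernel misses R y.
  Then \<lambda>_i(r x^i \<otimes> y) = r x^i \<iota>(y) is well defined because x^i(c e) = c^(p^i) x^i e in E,
  commutes with x by construction, and in degree 0 it is \<iota> composed with R \<otimes>_R M \<cong> M.
\<close>

lemma module_mult: "module ((*) :: 'a::comm_ring_1 \<Rightarrow> 'a \<Rightarrow> 'a)"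
  by standard (auto simp: algebra_simps)

lemma is_ideal_conductor:
  assumes "module sM" and "module.subspace sM D"
  shows "is_ideal {r. sM r y \<in> D}"
proof -
  interpret M: module sM by fact
  show ?thesis
    unfolding is_ideal_def
    by (rule module.subspaceI[OF module_mult])
       (use M.subspace_0 M.subspace_add M.subspace_scale assms(2) in
         \<open>auto simp: M.scale_left_distrib simp flip: M.scale_scale\<close>)
qed

lemma is_ideal_annihilator: "module sM \<Longrightarrow> is_ideal (annihilator sM y)"
  using is_ideal_conductor[of sM "{0}" y] module.subspace_single_0
  by (fastforce simp: annihilator_def)

lemma subspace_ideal_scale:
  assumes "module sM" and "is_ideal J"
  shows "module.subspace sM ((\<lambda>j. sM j y) ` J)"
proof -
  interpret M: module sM by fact
  have J: "module.subspace (*) J" using assms(2) unfolding is_ideal_def .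
  show ?thesis
  proof (rule M.subspaceI)
    show "0 \<in> (\<lambda>j. sM j y) ` J"
      using module.subspace_0[OF module_mult J] by (force simp: image_iff)
    show "a + b \<in> (\<lambda>j. sM j y) ` J" if "a \<in> (\<lambda>j. sM j y) ` J" "b \<in> (\<lambda>j. sM j y) ` J" for a b
      using that module.subspace_add[OF module_mult J]
      by (auto simp: image_iff M.scale_left_distrib[symmetric])
    show "sM c a \<in> (\<lambda>j. sM j y) ` J" if "a \<in> (\<lambda>j. sM j y) ` J" for c a
      using that module.subspace_scale[OF module_mult J] by (auto simp: image_iff)
  qed
qed

definition module_hom_on ::
    "('a::comm_ring_1 \<Rightarrow> 'm::ab_group_add \<Rightarrow> 'm) \<Rightarrow> ('a \<Rightarrow> 'e::ab_group_add \<Rightarrow> 'e) \<Rightarrow>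
     'm set \<Rightarrow> ('m \<Rightarrow> 'e) \<Rightarrow> bool" where
  "module_hom_on sM sE D f \<longleftrightarrow>
     (\<forall>a\<in>D. \<forall>b\<in>D. f (a + b) = f a + f b) \<and> (\<forall>r. \<forall>a\<in>D. f (sM r a) = sE r (f a))"

lemma module_hom_iff_module_hom_on_UNIV:
  "module sM \<Longrightarrow> module sE \<Longrightarrow> module_hom sM sE f \<longleftrightarrow> module_hom_on sM sE UNIV f"
  unfolding module_hom_on_def module_hom_def module_hom_axioms_def by blast

lemma injective_module_obtains_conductor_hom:
  assumes "module sM" and "injective_module sE"
    and D: "module.subspace sM D" and f: "module_hom_on sM sE D f"
  obtains g where "\<And>a b. g (a + b) = g a + g b" and "\<And>r a. g (r * a) = sE r (g a)"
    and "\<And>r. sM r y \<in> D \<Longrightarrow> g r = f (sM r y)"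
proof -
  interpret M: module sM by fact
  let ?I = "{r. sM r y \<in> D}"
  have "f (sM (a + b) y) = f (sM a y) + f (sM b y)" if "a \<in> ?I" "b \<in> ?I" for a b
    using f that by (simp add: module_hom_on_def M.scale_left_distrib)
  moreover have "f (sM (r * a) y) = sE r (f (sM a y))" if "a \<in> ?I" for r a
    using f that by (simp add: module_hom_on_def flip: M.scale_scale)
  ultimately have "\<exists>g. (\<forall>a b. g (a + b) = g a + g b) \<and> (\<forall>r a. g (r * a) = sE r (g a)) \<and>
      (\<forall>a\<in>?I. g a = f (sM a y))"
    using \<open>injective_module sE\<close>[unfolded injective_module_def, rule_format,
        of ?I "\<lambda>r. f (sM r y)", OF is_ideal_conductor[OF \<open>module sM\<close> D]]
    by blast
  with that show thesis by auto
qed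

lemma conductor_hom_decomposition_indep:
  assumes "module sM" and D: "module.subspace sM D" and f: "module_hom_on sM sE D f"
    and gadd: "\<And>a b. g (a + b) = g a + g b" and gI: "\<And>r. sM r y \<in> D \<Longrightarrow> g r = f (sM r y)"
    and k: "a - sM k y \<in> D" and k': "a - sM k' y \<in> D"
  shows "f (a - sM k y) + g k = f (a - sM k' y) + g k'"
proof -
  interpret M: module sM by fact
  interpret g: additive g by standard (rule gadd)
  have fdiff: "f (u - v) = f u - f v" if "u \<in> D" "v \<in> D" for u v
    using f M.subspace_diff[OF D that] that unfolding module_hom_on_def
    by (metis diff_add_cancel eq_diff_eq)
  have eq: "sM (k' - k) y = (a - sM k y) - (a - sM k' y)"
    by (simp add: M.scale_left_diff_distrib)
  have "(a - sM k y) - (a - sM k' y) \<in> D" using M.subspace_diff[OF D k k'] .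
  then have "g (k' - k) = f (sM (k' - k) y)" unfolding eq[symmetric] by (rule gI)
  also have "\<dots> = f (a - sM k y) - f (a - sM k' y)" unfolding eq by (rule fdiff[OF k k'])
  finally show ?thesis by (simp add: g.diff algebra_simps)
qed

lemma injective_module_extend_span_insert:
  assumes "module sM" and "module sE" and "injective_module sE"
    and D: "module.subspace sM D" and f: "module_hom_on sM sE D f"
  shows "\<exists>f'. module_hom_on sM sE (module.span sM (insert y D)) f' \<and> (\<forall>a\<in>D. f' a = f a)"
proof -
  interpret M: module sM by fact
  interpret E: module sE by fact
  have fadd: "f (a + b) = f a + f b" if "a \<in> D" "b \<in> D" for a b
    using f that unfolding module_hom_on_def by blast
  have fscale: "f (sM r a) = sE r (f a)" if "a \<in> D" for r a
    using f that unfolding module_hom_on_def by blast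
  obtain g where gadd: "\<And>a b. g (a + b) = g a + g b"
    and gscale: "\<And>r a. g (r * a) = sE r (g a)" and gI: "\<And>r. sM r y \<in> D \<Longrightarrow> g r = f (sM r y)"
    using injective_module_obtains_conductor_hom[OF assms(1,3) D f] by blast
  define f' where "f' a = (let k = SOME k. a - sM k y \<in> D in f (a - sM k y) + g k)" for a
  have f'_eq: "f' a = f (a - sM k y) + g k" if "a - sM k y \<in> D" for a k
    unfolding f'_def Let_def
    by (rule conductor_hom_decomposition_indep[OF \<open>module sM\<close> D f gadd gI])
       (use someI[of "\<lambda>k. a - sM k y \<in> D"] that in auto)
  have span: "module.span sM (insert y D) = {a. \<exists>k. a - sM k y \<in> D}"
    using M.span_insert[of y D] M.span_eq_iff[THEN iffD2, OF D] by simp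
  have "module_hom_on sM sE (module.span sM (insert y D)) f'"
    unfolding module_hom_on_def span
  proof (intro conjI ballI allI; elim CollectE exE)
    fix a b k l assume a: "a - sM k y \<in> D" and b: "b - sM l y \<in> D"
    have eq: "(a + b) - sM (k + l) y = (a - sM k y) + (b - sM l y)"
      by (simp add: M.scale_left_distrib)
    have "(a + b) - sM (k + l) y \<in> D" unfolding eq by (rule M.subspace_add[OF D a b])
    then have "f' (a + b) = f ((a + b) - sM (k + l) y) + g (k + l)" by (rule f'_eq)
    also have "\<dots> = (f (a - sM k y) + g k) + (f (b - sM l y) + g l)"
      unfolding eq fadd[OF a b] gadd by (simp only: ac_simps)
    finally show "f' (a + b) = f' a + f' b" by (simp only: f'_eq[OF a] f'_eq[OF b])
  next
    fix r a k assume a: "a - sM k y \<in> D"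
    have eq: "sM r a - sM (r * k) y = sM r (a - sM k y)" by (simp add: M.scale_right_diff_distrib)
    have "sM r a - sM (r * k) y \<in> D" unfolding eq by (rule M.subspace_scale[OF D a])
    then have "f' (sM r a) = f (sM r a - sM (r * k) y) + g (r * k)" by (rule f'_eq)
    also have "\<dots> = sE r (f (a - sM k y) + g k)"
      unfolding eq fscale[OF a] gscale by (simp only: E.scale_right_distrib)
    finally show "f' (sM r a) = sE r (f' a)" by (simp only: f'_eq[OF a])
  qed
  moreover have "f' a = f a" if "a \<in> D" for a
    using f'_eq[of a 0] that gadd[of 0 0] by simp
  ultimately show ?thesis by blast
qed

lemma simple_quotient_span_insert:
  assumes "module sM" and A: "module.subspace sM A" and "module.subspace sM B" and "A \<subset> B"
    and simple: "\<not> (\<exists>L. module.subspace sM L \<and> A \<subset> L \<and> L \<subset> B)"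
    and "y \<in> B" and "y \<notin> A"
  shows "module.span sM (insert y A) = B"
proof -
  interpret M: module sM by fact
  have "A \<subseteq> M.span (insert y A)" "y \<in> M.span (insert y A)"
    using M.span_superset[of "insert y A"] by auto
  moreover have "M.span (insert y A) \<subseteq> B"
    using assms(3,4,6) by (intro M.span_minimal) auto
  ultimately show ?thesis using simple \<open>y \<notin> A\<close> by blast
qed

lemma injective_module_extend_finite_length:
  assumes "module sM" and "module sE" and "injective_module sE" and "finite_length sM"
    and S: "module.subspace sM S" and f: "module_hom_on sM sE S f"
  shows "\<exists>g. module_hom sM sE g \<and> (\<forall>a\<in>S. g a = f a)"
proof -
  interpret M: module sM by fact
  obtain n N where N0: "N 0 = {0}" and Nn: "N n = UNIV" and N: "\<forall>j\<le>n. M.subspace (N j)"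
    and step: "\<forall>j<n. N j \<subset> N (Suc j) \<and> \<not> (\<exists>L. M.subspace L \<and> N j \<subset> L \<and> L \<subset> N (Suc j))"
    using \<open>finite_length sM\<close> unfolding finite_length_def by blast
  have extend: "\<exists>D g. M.subspace D \<and> N j \<subseteq> D \<and> S \<subseteq> D \<and> module_hom_on sM sE D g \<and> (\<forall>a\<in>S. g a = f a)"
    if "j \<le> n" for j
    using that
  proof (induction j)
    case 0
    have "N 0 \<subseteq> S" using M.subspace_0[OF S] N0 by simp
    then show ?case using S f by blast
  next
    case (Suc j)
    then obtain D g where D: "M.subspace D" "N j \<subseteq> D" "S \<subseteq> D" "module_hom_on sM sE D g"
      and gf: "\<forall>a\<in>S. g a = f a" by (meson Suc_leD)
    show ?case
    proof (cases "N (Suc j) \<subseteq> D")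
      case True
      with D gf show ?thesis by blast
    next
      case False
      then obtain y where y: "y \<in> N (Suc j)" "y \<notin> D" by blast
      obtain g' where g': "module_hom_on sM sE (M.span (insert y D)) g'" "\<forall>a\<in>D. g' a = g a"
        using injective_module_extend_span_insert assms(1-3) D(1,4) by blast
      have "j < n" using Suc.prems by simp
      moreover have "y \<notin> N j" using y(2) D(2) by blast
      ultimately have "N (Suc j) = M.span (insert y (N j))"
        using simple_quotient_span_insert[OF \<open>module sM\<close>, of "N j" "N (Suc j)" y] N step y(1)
        by simp
      also have "\<dots> \<subseteq> M.span (insert y D)" using D(2) by (intro M.span_mono) auto
      finally have "N (Suc j) \<subseteq> M.span (insert y D)" .
      moreover have "S \<subseteq> M.span (insert y D)" using D(3) M.span_superset by blast
      moreover have "\<forall>a\<in>S. g' a = f a" using g'(2) gf D(3) by auto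
      ultimately show ?thesis using g'(1) M.subspace_span by blast
    qed
  qed
  obtain D g where "N n \<subseteq> D" "module_hom_on sM sE D g" "\<forall>a\<in>S. g a = f a"
    using extend[of n] by blast
  moreover have "D = UNIV" using \<open>N n \<subseteq> D\<close> Nn by blast
  ultimately have "module_hom_on sM sE UNIV g" "\<forall>a\<in>S. g a = f a" by simp_all
  then show ?thesis using module_hom_iff_module_hom_on_UNIV assms(1,2) by blast
qed

definition simple_submodule :: "('a::comm_ring_1 \<Rightarrow> 'm::ab_group_add \<Rightarrow> 'm) \<Rightarrow> 'm set \<Rightarrow> bool" where
  "simple_submodule sM N \<longleftrightarrow> module.subspace sM N \<and> N \<noteq> {0} \<and>
     \<not> (\<exists>L. module.subspace sM L \<and> {0} \<subset> L \<and> L \<subset> N)"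

lemma finite_length_obtains_simple_submodule:
  fixes sM :: "'a::comm_ring_1 \<Rightarrow> 'm::ab_group_add \<Rightarrow> 'm" and y :: 'm
  assumes "module sM" and "finite_length sM" and "y \<noteq> 0"
  obtains N where "simple_submodule sM N"
proof -
  interpret M: module sM by fact
  obtain n N where N0: "N 0 = {0}" and Nn: "N n = UNIV" and N: "\<forall>j\<le>n. M.subspace (N j)"
    and step: "\<forall>j<n. N j \<subset> N (Suc j) \<and> \<not> (\<exists>L. M.subspace L \<and> N j \<subset> L \<and> L \<subset> N (Suc j))"
    using \<open>finite_length sM\<close> unfolding finite_length_def by blast
  have "n \<noteq> 0"
  proof
    assume "n = 0"
    then have "y \<in> N 0" using Nn by simp
    with N0 \<open>y \<noteq> 0\<close> show False by simp
  qed
  then have "simple_submodule sM (N 1)"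
    using N step[rule_format, of 0] N0 unfolding simple_submodule_def by auto
  then show thesis by (rule that)
qed

lemma simple_submodule_eq_span_singleton:
  assumes "module sM" and N: "simple_submodule sM N" and "y \<in> N" and "y \<noteq> 0"
  shows "module.span sM {y} = N"
proof -
  interpret M: module sM by fact
  have "M.span {y} \<subseteq> N" using N \<open>y \<in> N\<close> unfolding simple_submodule_def
    by (intro M.span_minimal) auto
  moreover have "{0} \<subset> M.span {y}"
    using M.span_zero M.span_base[of y "{y}"] \<open>y \<noteq> 0\<close> by auto
  ultimately show ?thesis using N M.subspace_span unfolding simple_submodule_def by blast
qed

lemma maximal_ideal_annihilator:
  assumes "module sM" and simple: "simple_submodule sM (module.span sM {y})"
  shows "maximal_ideal (annihilator sM y)"
proof -
  interpret M: module sM by fact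
  let ?A = "annihilator sM y"
  have "y \<noteq> 0"
  proof
    assume "y = 0"
    then have "M.span {y} = {0}" using M.span_zero by (auto simp: M.span_singleton)
    with simple show False unfolding simple_submodule_def by blast
  qed
  have "J = ?A \<or> J = UNIV" if J: "is_ideal J" "?A \<subseteq> J" for J
  proof -
    have J': "module.subspace (*) J" using J(1) unfolding is_ideal_def .
    have JS: "M.subspace ((\<lambda>j. sM j y) ` J)" by (rule subspace_ideal_scale[OF \<open>module sM\<close> J(1)])
    have "(\<lambda>j. sM j y) ` J \<subseteq> M.span {y}" by (auto simp: M.span_singleton)
    moreover have "\<not> ({0} \<subset> (\<lambda>j. sM j y) ` J \<and> (\<lambda>j. sM j y) ` J \<subset> M.span {y})"
      using simple JS unfolding simple_submodule_def by blast
    moreover have "0 \<in> (\<lambda>j. sM j y) ` J" using M.subspace_0[OF JS] .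
    ultimately consider "(\<lambda>j. sM j y) ` J = {0}" | "(\<lambda>j. sM j y) ` J = M.span {y}"
      by blast
    then show ?thesis
    proof cases
      case 1
      then have "J \<subseteq> ?A" by (auto simp: annihilator_def)
      then show ?thesis using J(2) by blast
    next
      case 2
      then have "y \<in> (\<lambda>j. sM j y) ` J" using M.span_base[of y "{y}"] by simp
      then obtain j where j: "j \<in> J" "sM j y = y" by auto
      then have "1 - j \<in> J" using J(2) by (auto simp: annihilator_def M.scale_left_diff_distrib)
      then have "1 \<in> J" using module.subspace_add[OF module_mult J' j(1)] by force
      then have "r \<in> J" for r using module.subspace_scale[OF module_mult J', of 1 r] by simp
      then show ?thesis by blast
    qed
  qed
  moreover have "1 \<notin> ?A" using \<open>y \<noteq> 0\<close> by (simp add: annihilator_def)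
  then have "?A \<noteq> UNIV" by blast
  ultimately show ?thesis
    unfolding maximal_ideal_def using is_ideal_annihilator[OF \<open>module sM\<close>] by blast
qed

lemma module_hom_on_span_singleton:
  assumes "module sM" and "module sE" and ann: "annihilator sM y \<subseteq> annihilator sE e"
  shows "\<exists>f. module_hom_on sM sE (module.span sM {y}) f \<and> (\<forall>r. f (sM r y) = sE r e)"
proof -
  interpret M: module sM by fact
  interpret E: module sE by fact
  define f where "f a = sE (SOME r. a = sM r y) e" for a
  have f: "f (sM r y) = sE r e" for r
  proof -
    let ?r = "SOME r'. sM r y = sM r' y"
    have "sM r y = sM ?r y" by (rule someI) (rule refl)
    then have "sM (r - ?r) y = 0" by (simp add: M.scale_left_diff_distrib)
    then have "r - ?r \<in> annihilator sE e" using ann by (auto simp: annihilator_def)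
    then show ?thesis by (simp add: f_def annihilator_def E.scale_left_diff_distrib)
  qed
  have "module_hom_on sM sE (M.span {y}) f"
    unfolding module_hom_on_def M.span_singleton
    by (auto simp: f E.scale_left_distrib simp flip: M.scale_left_distrib)
  with f show ?thesis by blast
qed

lemma inj_on_span_singleton:
  assumes "module sM" and "module sE" and ann: "annihilator sE e \<subseteq> annihilator sM y"
    and f: "\<And>r. f (sM r y) = sE r e"
  shows "inj_on f (module.span sM {y})"
proof (rule inj_onI)
  interpret M: module sM by fact
  interpret E: module sE by fact
  fix a b assume "a \<in> M.span {y}" "b \<in> M.span {y}" "f a = f b"
  then obtain r s where a: "a = sM r y" and b: "b = sM s y" and "sE r e = sE s e"
    by (auto simp: M.span_singleton f)
  then have "sE (r - s) e = 0" by (simp add: E.scale_left_diff_distrib)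
  then have "sM (r - s) y = 0" using ann by (auto simp: annihilator_def)
  then show "a = b" unfolding a b by (simp add: M.scale_left_diff_distrib)
qed

lemma inj_if_inj_on_nonzero_submodule:
  assumes irr: "zero_submodule_irreducible sM" and g: "module_hom sM sE g"
    and S: "module.subspace sM S" "S \<noteq> {0}" and "inj_on g S"
  shows "inj g"
proof -
  interpret g: module_hom sM sE g by fact
  define K where "K = {a. g a = 0}"
  have "g.m1.subspace K" unfolding K_def by (rule g.m1.subspaceI) (auto simp: g.add g.scale)
  moreover have "K \<inter> S = {0}"
    using \<open>inj_on g S\<close> g.inj_on_iff_eq_0[OF S(1)] g.m1.subspace_0[OF S(1)] by (auto simp: K_def)
  ultimately have "K = {0}" using irr S unfolding zero_submodule_irreducible_def by blast
  then show ?thesis using g.inj_on_iff_eq_0[OF g.m1.subspace_UNIV] by (auto simp: K_def)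
qed

lemma embedding_into_injective_hull_residue_field:
  fixes sM :: "'a::comm_ring_1 \<Rightarrow> 'm::ab_group_add \<Rightarrow> 'm" and y :: 'm
  assumes "local_ring m" and hull: "injective_hull_residue_field sE m"
    and "module sM" and "y \<noteq> 0" and "finite_length sM" and "zero_submodule_irreducible sM"
  shows "\<exists>\<iota>. module_hom sM sE \<iota> \<and> inj \<iota>"
proof -
  interpret M: module sM by fact
  obtain e where "module sE" and "injective_module sE" and e: "annihilator sE e = m"
    using hull unfolding injective_hull_residue_field_def by blast
  obtain N where N: "simple_submodule sM N"
    using finite_length_obtains_simple_submodule[OF \<open>module sM\<close> assms(5,4)] .
  then obtain y0 where "y0 \<in> N" "y0 \<noteq> 0"
    unfolding simple_submodule_def using M.subspace_0 by blast
  then have "M.span {y0} = N" by (rule simple_submodule_eq_span_singleton[OF \<open>module sM\<close> N])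
  with N have simple: "simple_submodule sM (M.span {y0})" by simp
  then have ann: "annihilator sM y0 = annihilator sE e"
    using maximal_ideal_annihilator[OF \<open>module sM\<close>] \<open>local_ring m\<close> e
    unfolding local_ring_def by blast
  then obtain f where f: "module_hom_on sM sE (M.span {y0}) f" "\<And>r. f (sM r y0) = sE r e"
    using module_hom_on_span_singleton[OF \<open>module sM\<close> \<open>module sE\<close>] by blast
  have f_inj: "inj_on f (M.span {y0})"
    using inj_on_span_singleton[OF \<open>module sM\<close> \<open>module sE\<close>] ann f by blast
  obtain g where g: "module_hom sM sE g" "\<forall>a\<in>M.span {y0}. g a = f a"
    using injective_module_extend_finite_length[OF \<open>module sM\<close> \<open>module sE\<close>] assms(5) f(1)
      \<open>injective_module sE\<close> M.subspace_span by blast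
  have "inj_on g (M.span {y0}) \<longleftrightarrow> inj_on f (M.span {y0})"
    by (rule inj_on_cong) (use g(2) in simp)
  with f_inj have "inj_on g (M.span {y0})" by simp
  then have "inj g"
    using inj_if_inj_on_nonzero_submodule[OF assms(6) g(1)] simple
    unfolding simple_submodule_def by blast
  with g show ?thesis by blast
qed

text \<open>The additive extension of (a, y) \<mapsto> a \<cdot> w y to the free abelian group; it descends to
  Rx^i \<otimes>_R M when w is additive and p^i-semilinear.\<close>
definition lift_free ::
    "('a::comm_ring_1 \<Rightarrow> 'e::ab_group_add \<Rightarrow> 'e) \<Rightarrow> ('m \<Rightarrow> 'e) \<Rightarrow> (('a \<times> 'm) \<Rightarrow>\<^sub>0 int) \<Rightarrow> 'e" where
  "lift_free sE w g =
     (\<Sum>z\<in>Poly_Mapping.keys g. sE (of_int (Poly_Mapping.lookup g z) * fst z) (w (snd z)))"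

lemma lift_free_eq_sum_superset:
  assumes "module sE" and "finite K" and "Poly_Mapping.keys g \<subseteq> K"
  shows "lift_free sE w g = (\<Sum>z\<in>K. sE (of_int (Poly_Mapping.lookup g z) * fst z) (w (snd z)))"
proof -
  interpret E: module sE by fact
  show ?thesis unfolding lift_free_def
    by (rule sum.mono_neutral_left) (use assms in \<open>auto simp: in_keys_iff\<close>)
qed

lemma additive_lift_free:
  fixes sE :: "'a::comm_ring_1 \<Rightarrow> 'e::ab_group_add \<Rightarrow> 'e" and w :: "'m \<Rightarrow> 'e"
  assumes "module sE"
  shows "additive (lift_free sE w)"
proof
  interpret E: module sE by fact
  fix g h :: "('a \<times> 'm) \<Rightarrow>\<^sub>0 int"
  let ?K = "Poly_Mapping.keys g \<union> Poly_Mapping.keys h"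
  have K: "finite ?K" by simp
  have "lift_free sE w (g + h) =
      (\<Sum>z\<in>?K. sE (of_int (Poly_Mapping.lookup (g + h) z) * fst z) (w (snd z)))"
    by (rule lift_free_eq_sum_superset[OF assms K]) (rule keys_add)
  also have "\<dots> = (\<Sum>z\<in>?K. sE (of_int (Poly_Mapping.lookup g z) * fst z) (w (snd z))
       + sE (of_int (Poly_Mapping.lookup h z) * fst z) (w (snd z)))"
    by (simp add: lookup_add distrib_right E.scale_left_distrib)
  also have "\<dots> = lift_free sE w g + lift_free sE w h"
    by (simp add: sum.distrib lift_free_eq_sum_superset[OF assms K])
  finally show "lift_free sE w (g + h) = lift_free sE w g + lift_free sE w h" .
qed

lemma lift_free_frag_of [simp]: "lift_free sE w (frag_of z) = sE (fst z) (w (snd z))"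
  by (simp add: lift_free_def)

lemma lift_free_module_hom:
  assumes "module_hom sM sE \<iota>"
  shows "lift_free sE (\<iota> \<circ> w) g = \<iota> (lift_free sM w g)"
proof -
  interpret \<iota>: module_hom sM sE \<iota> by fact
  show ?thesis by (simp add: lift_free_def \<iota>.sum \<iota>.scale)
qed

lemma tens_rel_diff: "g \<in> tens_rel p s i \<Longrightarrow> h \<in> tens_rel p s i \<Longrightarrow> g - h \<in> tens_rel p s i"
  using rel_plus[OF _ rel_uminus] by (metis diff_conv_add_uminus)

lemma tcls_eq_iff: "tcls p s i g = tcls p s i h \<longleftrightarrow> g - h \<in> tens_rel p s i"
proof
  assume "tcls p s i g = tcls p s i h"
  moreover have "g \<in> tcls p s i g" unfolding tcls_def using rel_zero by simp
  ultimately show "g - h \<in> tens_rel p s i" unfolding tcls_def by blast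
next
  assume gh: "g - h \<in> tens_rel p s i"
  show "tcls p s i g = tcls p s i h" unfolding tcls_def
  proof (intro Collect_cong iffI)
    fix x assume "x - g \<in> tens_rel p s i"
    from rel_plus[OF this gh] show "x - h \<in> tens_rel p s i" by simp
  next
    fix x assume "x - h \<in> tens_rel p s i"
    from tens_rel_diff[OF this gh] show "x - g \<in> tens_rel p s i" by simp
  qed
qed

lemma lift_free_tens_rel:
  assumes "module sE" and "additive w" and semilinear: "\<And>c y. w (s c y) = sE (c ^ (p ^ i)) (w y)"
    and "g \<in> tens_rel p s i"
  shows "lift_free sE w g = 0"
  using \<open>g \<in> tens_rel p s i\<close>
proof induction
  interpret E: module sE by fact
  interpret w: additive w by fact
  interpret lift: additive "lift_free sE w" by (rule additive_lift_free[OF \<open>module sE\<close>])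
  {
    case (rel_add_left a b y)
    then show ?case by (simp add: lift.diff E.scale_left_distrib)
  next
    case (rel_add_right a y z)
    then show ?case by (simp add: lift.diff w.add E.scale_right_distrib)
  next
    case (rel_balanced a c y)
    then show ?case by (simp add: lift.diff semilinear)
  next
    case rel_zero
    then show ?case by (rule lift.zero)
  next
    case (rel_plus g h)
    then show ?case by (simp add: lift.add)
  next
    case (rel_uminus g)
    then show ?case by (simp add: lift.minus)
  }
qed

lemma free_smul_eq_frag_extend: "free_smul r g = frag_extend (\<lambda>z. frag_of (r * fst z, snd z)) g"
  unfolding free_smul_def frag_extend_def
  by (intro sum.cong refl poly_mapping_eqI) (simp add: lookup_single frag_cmul_def)

lemma free_x_eq_frag_extend: "free_x p g = frag_extend (\<lambda>z. frag_of (fst z ^ p, snd z)) g"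
  unfolding free_x_def frag_extend_def
  by (intro sum.cong refl poly_mapping_eqI) (simp add: lookup_single frag_cmul_def)

lemma lift_free_free_smul:
  assumes "module sE"
  shows "lift_free sE w (free_smul r g) = sE r (lift_free sE w g)"
proof -
  interpret E: module sE by fact
  interpret lift: additive "lift_free sE w" by (rule additive_lift_free[OF assms])
  show ?thesis
    unfolding free_smul_eq_frag_extend using subset_UNIV
  proof (induction g rule: frag_induction)
    case (diff a b)
    then show ?case by (simp add: frag_extend_diff lift.diff E.scale_right_diff_distrib)
  qed (simp_all add: lift.zero)
qed

lemma lift_free_free_x:
  assumes "Rxf_module p sE xE"
  shows "lift_free sE (xE \<circ> w) (free_x p g) = xE (lift_free sE w g)"
proof -
  have "module sE" and "additive xE" and xE_scale: "\<And>r a. xE (sE r a) = sE (r ^ p) (xE a)"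
    using assms unfolding Rxf_module_def additive_def by blast+
  interpret xE: additive xE by fact
  interpret lift: additive "lift_free sE w" by (rule additive_lift_free[OF \<open>module sE\<close>])
  interpret lift': additive "lift_free sE (\<lambda>y. xE (w y))"
    by (rule additive_lift_free[OF \<open>module sE\<close>])
  show ?thesis
    unfolding free_x_eq_frag_extend comp_def using subset_UNIV
  proof (induction g rule: frag_induction)
    case (diff a b)
    then show ?case by (simp add: frag_extend_diff lift.diff lift'.diff xE.diff)
  qed (simp_all add: lift.zero lift'.zero xE.zero xE_scale)
qed

text \<open>The isomorphism R \<otimes>_R M \<cong> M: every element of degree 0 is a pure tensor 1 \<otimes> y.\<close>
lemma tens_rel_degree_0:
  assumes "module sM"
  shows "g - frag_of (1, lift_free sM (\<lambda>y. y) g) \<in> tens_rel p sM 0"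
  using subset_UNIV
proof (induction g rule: frag_induction)
  interpret M: module sM by fact
  interpret lift: additive "lift_free sM (\<lambda>y. y)" by (rule additive_lift_free[OF assms])
  {
    case zero
    have "gen 1 (0 + 0) - gen 1 0 - gen 1 0 \<in> tens_rel p sM 0" by (rule rel_add_right)
    then show ?case by (simp add: lift.zero)
  next
    case (one z)
    have "gen (1 * fst z ^ (p ^ 0)) (snd z) - gen 1 (sM (fst z) (snd z)) \<in> tens_rel p sM 0"
      by (rule rel_balanced)
    then show ?case by simp
  next
    case (diff a b)
    define A where "A = lift_free sM (\<lambda>y. y) a"
    define B where "B = lift_free sM (\<lambda>y. y) b"
    have "(a - gen 1 A) - (b - gen 1 B) \<in> tens_rel p sM 0"
      using tens_rel_diff[OF diff(1,2)] unfolding A_def B_def .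
    moreover have "gen 1 ((A - B) + B) - gen 1 (A - B) - gen 1 B \<in> tens_rel p sM 0"
      by (rule rel_add_right)
    ultimately have "((a - gen 1 A) - (b - gen 1 B)) + (gen 1 ((A - B) + B) - gen 1 (A - B) - gen 1 B)
        \<in> tens_rel p sM 0" by (rule rel_plus)
    then show ?case by (simp add: lift.diff A_def B_def algebra_simps)
  }
qed

lemma Rxf_module_funpow:
  assumes "Rxf_module p sE xE"
  shows "additive (xE ^^ i)" and "(xE ^^ i) (sE c a) = sE (c ^ (p ^ i)) ((xE ^^ i) a)"
proof -
  have xE_add: "xE (a + b) = xE a + xE b" and xE_scale: "xE (sE r a) = sE (r ^ p) (xE a)"
    for a b r using assms unfolding Rxf_module_def by blast+
  show "additive (xE ^^ i)" by standard (induction i, simp_all add: xE_add)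
  show "(xE ^^ i) (sE c a) = sE (c ^ (p ^ i)) ((xE ^^ i) a)"
    by (induction i) (simp_all add: xE_scale power_mult[symmetric] mult.commute)
qed

text \<open>The R[x,f]-homomorphism extending \<iota> : M \<rightarrow> E, given in degree i by r x^i \<otimes> y \<mapsto> r x^i \<iota>(y).\<close>
definition induced_hom ::
    "nat \<Rightarrow> ('a::comm_ring_1 \<Rightarrow> 'm::ab_group_add \<Rightarrow> 'm) \<Rightarrow> ('a \<Rightarrow> 'e::ab_group_add \<Rightarrow> 'e) \<Rightarrow>
     ('e \<Rightarrow> 'e) \<Rightarrow> ('m \<Rightarrow> 'e) \<Rightarrow> nat \<Rightarrow> (('a \<times> 'm) \<Rightarrow>\<^sub>0 int) set \<Rightarrow> 'e" where
  "induced_hom p sM sE xE \<iota> i C = lift_free sE ((xE ^^ i) \<circ> \<iota>) (SOME g. C = tcls p sM i g)"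

lemma induced_hom_tcls:
  assumes "Rxf_module p sE xE" and "module_hom sM sE \<iota>"
  shows "induced_hom p sM sE xE \<iota> i (tcls p sM i g) = lift_free sE ((xE ^^ i) \<circ> \<iota>) g"
proof -
  interpret \<iota>: module_hom sM sE \<iota> by fact
  interpret x: additive "xE ^^ i" by (rule Rxf_module_funpow(1)[OF assms(1)])
  interpret lift: additive "lift_free sE ((xE ^^ i) \<circ> \<iota>)"
    by (rule additive_lift_free[OF \<iota>.m2.module_axioms])
  let ?g = "SOME g'. tcls p sM i g = tcls p sM i g'"
  have "tcls p sM i g = tcls p sM i ?g" by (rule someI) (rule refl)
  then have "g - ?g \<in> tens_rel p sM i" by (rule tcls_eq_iff[THEN iffD1])
  moreover have "additive ((xE ^^ i) \<circ> \<iota>)" by standard (simp add: \<iota>.add x.add)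
  ultimately have "lift_free sE ((xE ^^ i) \<circ> \<iota>) (g - ?g) = 0"
    by (intro lift_free_tens_rel[OF \<iota>.m2.module_axioms])
       (simp_all add: \<iota>.scale Rxf_module_funpow(2)[OF assms(1)])
  then show ?thesis by (simp add: induced_hom_def lift.diff)
qed

lemma homog_Rxf_hom_induced_hom:
  assumes "Rxf_module p sE xE" and "module_hom sM sE \<iota>"
  shows "homog_Rxf_hom p sM sE xE (induced_hom p sM sE xE \<iota>)"
proof -
  interpret \<iota>: module_hom sM sE \<iota> by fact
  interpret lift: additive "lift_free sE ((xE ^^ i) \<circ> \<iota>)" for i
    by (rule additive_lift_free[OF \<iota>.m2.module_axioms])
  have "(xE ^^ Suc i) \<circ> \<iota> = xE \<circ> ((xE ^^ i) \<circ> \<iota>)" for i by auto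
  then show ?thesis
    unfolding homog_Rxf_hom_def induced_hom_tcls[OF assms]
    by (simp only: lift.add lift_free_free_smul[OF \<iota>.m2.module_axioms] lift_free_free_x[OF assms(1)]
        simp_thms all_simps)
qed

lemma inj_on_induced_hom_0:
  assumes "Rxf_module p sE xE" and "module_hom sM sE \<iota>" and "inj \<iota>"
  shows "inj_on (induced_hom p sM sE xE \<iota> 0) (range (tcls p sM 0))"
proof (rule inj_onI)
  interpret \<iota>: module_hom sM sE \<iota> by fact
  fix C D assume "C \<in> range (tcls p sM 0)" "D \<in> range (tcls p sM 0)"
    and CD: "induced_hom p sM sE xE \<iota> 0 C = induced_hom p sM sE xE \<iota> 0 D"
  then obtain g h where C: "C = tcls p sM 0 g" and D: "D = tcls p sM 0 h" by blast
  have "\<iota> (lift_free sM (\<lambda>y. y) g) = \<iota> (lift_free sM (\<lambda>y. y) h)"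
    using CD lift_free_module_hom[OF assms(2), of "\<lambda>y. y"]
    by (simp add: C D induced_hom_tcls[OF assms(1,2)] comp_def)
  then have "lift_free sM (\<lambda>y. y) g = lift_free sM (\<lambda>y. y) h" using \<open>inj \<iota>\<close> by (simp add: inj_eq)
  moreover have "(g - frag_of (1, lift_free sM (\<lambda>y. y) g)) - (h - frag_of (1, lift_free sM (\<lambda>y. y) h))
      \<in> tens_rel p sM 0"
    by (intro tens_rel_diff tens_rel_degree_0 \<iota>.m1.module_axioms)
  ultimately have "g - h \<in> tens_rel p sM 0" by simp
  then show "C = D" unfolding C D by (rule tcls_eq_iff[THEN iffD2])
qed

theorem lemma3p1:
  fixes m :: "'a::comm_ring_1 set"
    and p :: nat
    and sE :: "'a \<Rightarrow> 'e::ab_group_add \<Rightarrow> 'e"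
    and xE :: "'e \<Rightarrow> 'e"
    and sM :: "'a \<Rightarrow> 'm::ab_group_add \<Rightarrow> 'm"
  assumes "noetherian_ring TYPE('a)"
    and "local_ring m"
    and "has_prime_char TYPE('a) p"
    and "Rxf_module p sE xE"
    and "injective_hull_residue_field sE m"
    and "module sM"
    and "\<exists>y::'m. y \<noteq> 0"
    and "finite_length sM"
    and "zero_submodule_irreducible sM"
  shows "\<exists>lam. homog_Rxf_hom p sM sE xE lam \<and> inj_on (lam 0) (range (tcls p sM 0))"
proof -
  obtain y :: 'm where "y \<noteq> 0" using assms(7) by blast
  then obtain \<iota> where "module_hom sM sE \<iota>" and "inj \<iota>"
    using embedding_into_injective_hull_residue_field assms(2,5,6,8,9) by blast
  then show ?thesis
    using homog_Rxf_hom_induced_hom inj_on_induced_hom_0 assms(4) by blast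
qed

end
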